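(* Consider negligible unlearning cost ($\theta_i=0$ for all $i$), $d_i^{\max}=d^{\max}$ for all $i$, and $m_1<\dots<m_I$ with $m_i=(\xi_i\ell_i)^{-1}-\epsilon_i$. Let $d^a$ denote the unique Nash equilibrium of the allowing game. (1) Suppose some $j\in\mathcal I$ satisfies $(I-j)d^{\max}<m_j<(I-j+1)d^{\max}$ (so $d^a_i=0$ for $i<j$, $d^a_j=m_j-(I-j)d^{\max}\in(0,d^{\max})$, $d^a_i=d^{\max}$ for $i>j$), and $$\ln\frac{(I-j+1)d^{\max}+\epsilon_i}{(I-j)d^{\max}+\epsilon_i}\ge\xi_i\ell_i d^{\max}\quad\text{for all } i\in\{j,\dots,I\}.$$ Then the profile $d^f$ with $d^f_i=0$ for $i<j$ and $d^f_i=d^{\max}$ for $i\ge j$ is a Nash equilibrium of the forbidding game; user $j$'s payoff at $d^f$ is strictly lower than at $d^a$, every other user's payoff at $d^f$ is strictly higher than at $d^a$, and $\sum_i d^f_i>\sum_i d^a_i$. (2) Suppose some $j\in\mathcal I$ satisfies $(I-j)d^{\max}<m_j<(I-j+1)d^{\max}$ and $$\ln\frac{(I-j+1)d^{\max}+\epsilon_i}{(I-j)d^{\max}+\epsilon_i}\le\xi_i\ell_i d^{\max}\quad\text{for all } i\in\{1,\dots,j\}.$$ Then the profile $d^f$ with $d^f_i=0$ for $i\le j$ and $d^f_i=d^{\max}$ for $i>j$ is a Nash equilibrium of the forbidding game; every user's payoff at $d^f$ is strictly lower than at $d^a$, and $\sum_i d^f_i<\sum_i d^a_i$. (3) If no $j\in\mathcal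 I$ satisfies $(I-j)d^{\max}\le m_j\le(I-j+1)d^{\max}$, then $d^a$ (in which every user chooses $0$ or $d^{\max}$) is a Nash equilibrium of the forbidding game; hence all users' payoffs and the total remaining data size coincide in the two games at this equilibrium.
   Context: Allowing game (negligible unlearning cost): a finite set of users $\mathcal I=\{1,\dots,I\}$, $I\ge 2$, each with parameters $d_i^{\max}>0$, $\epsilon_i>0$, $\xi_i>0$, $\ell_i>0$; each user chooses $d_i\in[0,d_i^{\max}]$ (data kept), with payoff $U_i(d_i,\boldsymbol{d_{-i}})=\ln\big(\sum_{j\in\mathcal I}d_j+\epsilon_i\big)-\xi_i d_i\ell_i$. Under the stated hypotheses ($d_i^{\max}=d^{\max}$, strictly increasing $m_i$) this game has a unique Nash equilibrium. Forbidding game: same payoffs but strategy set $\{0,d_i^{\max}\}$ for each user $i$. In either game a (pure) Nash equilibrium is a profile from which no user can strictly increase its payoff by unilaterally switching to another strategy in its own strategy set. *)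

theory Defs
  imports Complex_Main
begin

text \<open>Users are indexed by 1..I. A strategy profile is a function nat => real;
  only its values on {1..I} matter.\<close>

definition payoff :: "nat \<Rightarrow> (nat \<Rightarrow> real) \<Rightarrow> (nat \<Rightarrow> real) \<Rightarrow> (nat \<Rightarrow> real)
    \<Rightarrow> nat \<Rightarrow> (nat \<Rightarrow> real) \<Rightarrow> real" where
  "payoff I eps xi ell i d = ln ((\<Sum>j\<in>{1..I}. d j) + eps i) - xi i * d i * ell i"

definition is_NE :: "nat \<Rightarrow> (nat \<Rightarrow> real) \<Rightarrow> (nat \<Rightarrow> real) \<Rightarrow> (nat \<Rightarrow> real)
    \<Rightarrow> real set \<Rightarrow> (nat \<Rightarrow> real) \<Rightarrow> bool" where
  "is_NE I eps xi ell S d \<longleftrightarrow>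
     (\<forall>i\<in>{1..I}. d i \<in> S) \<and>
     (\<forall>i\<in>{1..I}. \<forall>x\<in>S. payoff I eps xi ell i (d(i := x)) \<le> payoff I eps xi ell i d)"

definition allowing_NE where
  "allowing_NE I eps xi ell dmax d \<longleftrightarrow> is_NE I eps xi ell {0..dmax} d"

definition forbidding_NE where
  "forbidding_NE I eps xi ell dmax d \<longleftrightarrow> is_NE I eps xi ell {0, dmax} d"

definition mval :: "(nat \<Rightarrow> real) \<Rightarrow> (nat \<Rightarrow> real) \<Rightarrow> (nat \<Rightarrow> real) \<Rightarrow> nat \<Rightarrow> real" where
  "mval eps xi ell i = 1 / (xi i * ell i) - eps i"

end

theory Submission
  imports Defs
begin

text \<open>With the other users' choices fixed, user \<open>i\<close>'s payoff differs from
  \<open>ln y - xi i * ell i * y\<close>, where \<open>y\<close> is the total data size plus \<open>eps i\<close>, by a term that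
  does not depend on its own choice. This function of \<open>y\<close> is strictly unimodal with peak
  \<open>y = m i + eps i\<close>, so every payoff comparison in which the others' total is the same
  reduces to comparing the total with \<open>m i\<close>. Since the \<open>m i\<close> are strictly increasing, the
  allowing equilibrium keeps nothing below some user \<open>j\<close>, everything above it, and has total
  \<open>m j\<close> when \<open>j\<close> is interior; rounding \<open>j\<close> up or down then moves the total away from
  \<open>j\<close>'s peak, which hurts \<open>j\<close> and helps or hurts the others according to the direction.
  In the rounded profile the logarithmic hypotheses say exactly that the users on one side of
  \<open>j\<close> do not want to flip; for the users on the other side this follows from the ordering
  of the \<open>m i\<close>.\<close>

definition ln_minus_linear :: "real \<Rightarrow> real \<Rightarrow> real" where
  "ln_minus_linear c y = ln y - c * y"

lemma ln_minus_linear_strict_mono: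
  assumes "0 < y" "y < z" "c * z \<le> 1"
  shows "ln_minus_linear c y < ln_minus_linear c z"
proof -
  have "ln y - ln z < (y - z) / z"
    using assms by (intro ln_diff_less) auto
  also have "\<dots> \<le> c * (y - z)"
    using assms mult_right_mono[of "c * z" 1 "z - y"] by (simp add: field_simps)
  finally show ?thesis unfolding ln_minus_linear_def by (simp add: algebra_simps)
qed

lemma ln_minus_linear_strict_antimono:
  assumes "0 < y" "y < z" "1 \<le> c * y"
  shows "ln_minus_linear c z < ln_minus_linear c y"
proof -
  have "ln z - ln y < (z - y) / y"
    using assms by (intro ln_diff_less) auto
  also have "\<dots> \<le> c * (z - y)"
    using assms mult_right_mono[of 1 "c * y" "z - y"] by (simp add: field_simps)
  finally show ?thesis unfolding ln_minus_linear_def by (simp add: algebra_simps)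
qed

lemma ln_minus_linear_le_iff:
  assumes "0 < y" "0 < y + \<delta>"
  shows "ln_minus_linear c y \<le> ln_minus_linear c (y + \<delta>) \<longleftrightarrow> c * \<delta> \<le> ln ((y + \<delta>) / y)"
  using assms by (simp add: ln_minus_linear_def ln_div algebra_simps)

lemma ln_minus_linear_ge_iff:
  assumes "0 < y" "0 < y + \<delta>"
  shows "ln_minus_linear c (y + \<delta>) \<le> ln_minus_linear c y \<longleftrightarrow> ln ((y + \<delta>) / y) \<le> c * \<delta>"
  using assms by (simp add: ln_minus_linear_def ln_div algebra_simps)

lemma payoff_eq_ln_minus_linear:
  "payoff I eps xi ell i d
     = ln_minus_linear (xi i * ell i) (sum d {1..I} + eps i) + xi i * ell i * (sum d {1..I} - d i + eps i)"
  by (simp add: payoff_def ln_minus_linear_def algebra_simps)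

lemma payoff_diff_eq_ln_minus_linear_diff:
  assumes "sum d {1..I} - d i = sum d' {1..I} - d' i"
  shows "payoff I eps xi ell i d - payoff I eps xi ell i d'
     = ln_minus_linear (xi i * ell i) (sum d {1..I} + eps i) - ln_minus_linear (xi i * ell i) (sum d' {1..I} + eps i)"
proof -
  have "xi i * ell i * (sum d {1..I} - d i + eps i) = xi i * ell i * (sum d' {1..I} - d' i + eps i)"
    using assms by simp
  then show ?thesis unfolding payoff_eq_ln_minus_linear by simp
qed

lemma sum_fun_upd:
  "finite A \<Longrightarrow> i \<in> A \<Longrightarrow> sum (d(i := x)) A = sum d A - d i + (x :: real)"
  by (simp add: sum.remove)

lemma payoff_fun_upd_diff:
  assumes "i \<in> {1..I}"
  shows "payoff I eps xi ell i (d(i := x)) - payoff I eps xi ell i d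
     = ln_minus_linear (xi i * ell i) (sum d {1..I} - d i + x + eps i)
       - ln_minus_linear (xi i * ell i) (sum d {1..I} + eps i)"
  using payoff_diff_eq_ln_minus_linear_diff[of "d(i := x)" I i d] sum_fun_upd[of "{1..I}" i d x] assms
  by simp

lemma payoff_strict_mono_total:
  assumes "d i = d' i" "sum d {1..I} < sum d' {1..I}" "0 < sum d {1..I} + eps i"
  shows "payoff I eps xi ell i d < payoff I eps xi ell i d'"
  using assms by (simp add: payoff_def)

lemma sum_step_profile:
  fixes f :: "nat \<Rightarrow> real"
  assumes "j \<in> {1..I}" "\<And>i. i \<in> {1..I} \<Longrightarrow> i < j \<Longrightarrow> f i = 0"
    "\<And>i. i \<in> {1..I} \<Longrightarrow> j < i \<Longrightarrow> f i = b"
  shows "sum f {1..I} = f j + (real I - real j) * b"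
proof -
  have split: "{1..I} = {1..<j} \<union> insert j {j<..I}"
    using assms(1) by auto
  have "sum f {1..<j} = 0"
    using assms by (intro sum.neutral) auto
  moreover have "sum f {j<..I} = (real I - real j) * b"
    using assms by (simp add: of_nat_diff)
  ultimately show ?thesis
    unfolding split by (subst sum.union_disjoint) auto
qed

lemma forbidding_NE_if_no_profitable_flip:
  assumes binary: "\<forall>i\<in>{1..I}. d i \<in> {0, dmax}"
    and join: "\<And>i. i \<in> {1..I} \<Longrightarrow> d i = 0 \<Longrightarrow>
      ln_minus_linear (xi i * ell i) (sum d {1..I} + dmax + eps i)
        \<le> ln_minus_linear (xi i * ell i) (sum d {1..I} + eps i)"
    and leave: "\<And>i. i \<in> {1..I} \<Longrightarrow> d i = dmax \<Longrightarrow>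
      ln_minus_linear (xi i * ell i) (sum d {1..I} - dmax + eps i)
        \<le> ln_minus_linear (xi i * ell i) (sum d {1..I} + eps i)"
  shows "forbidding_NE I eps xi ell dmax d"
  unfolding forbidding_NE_def is_NE_def
proof (intro conjI ballI)
  show "d i \<in> {0, dmax}" if "i \<in> {1..I}" for i
    using binary that by blast
next
  fix i x assume i: "i \<in> {1..I}" and x: "x \<in> {0, dmax}"
  from binary i x consider "x = d i" | "d i = 0" "x = dmax" | "d i = dmax" "x = 0"
    by fastforce
  then have "ln_minus_linear (xi i * ell i) (sum d {1..I} - d i + x + eps i)
      \<le> ln_minus_linear (xi i * ell i) (sum d {1..I} + eps i)"
    using join[OF i] leave[OF i] by cases simp_all
  then show "payoff I eps xi ell i (d(i := x)) \<le> payoff I eps xi ell i d"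
    using payoff_fun_upd_diff[OF i, of eps xi ell d x] by simp
qed

lemma forbidding_NE_if_allowing_NE_binary:
  assumes "allowing_NE I eps xi ell dmax d" "\<forall>i\<in>{1..I}. d i \<in> {0, dmax}" "0 \<le> dmax"
  shows "forbidding_NE I eps xi ell dmax d"
  using assms unfolding allowing_NE_def forbidding_NE_def is_NE_def by auto

locale unlearning_game =
  fixes I :: nat and dmax :: real and eps xi ell :: "nat \<Rightarrow> real"
  assumes dmax_pos: "0 < dmax"
    and eps_pos: "\<And>i. i \<in> {1..I} \<Longrightarrow> 0 < eps i"
    and xi_pos: "\<And>i. i \<in> {1..I} \<Longrightarrow> 0 < xi i"
    and ell_pos: "\<And>i. i \<in> {1..I} \<Longrightarrow> 0 < ell i"
begin

abbreviation m :: "nat \<Rightarrow> real" where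
  "m \<equiv> mval eps xi ell"

lemma cost_pos: "i \<in> {1..I} \<Longrightarrow> 0 < xi i * ell i"
  using xi_pos ell_pos by simp

lemma peak_eq: "i \<in> {1..I} \<Longrightarrow> 1 / (xi i * ell i) = m i + eps i"
  by (simp add: mval_def)

lemma cost_mult_le_one_iff: "i \<in> {1..I} \<Longrightarrow> xi i * ell i * y \<le> 1 \<longleftrightarrow> y \<le> m i + eps i"
  by (metis cost_pos mult.commute peak_eq pos_le_divide_eq)

lemma one_le_cost_mult_iff: "i \<in> {1..I} \<Longrightarrow> 1 \<le> xi i * ell i * y \<longleftrightarrow> m i + eps i \<le> y"
  by (metis cost_pos mult.commute peak_eq pos_divide_le_eq)

lemma peak_pos: "i \<in> {1..I} \<Longrightarrow> 0 < m i + eps i"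
  by (metis cost_pos peak_eq zero_less_divide_1_iff)

lemma allowing_NE_range:
  "allowing_NE I eps xi ell dmax d \<Longrightarrow> i \<in> {1..I} \<Longrightarrow> 0 \<le> d i \<and> d i \<le> dmax"
  unfolding allowing_NE_def is_NE_def by auto

lemma allowing_NE_sum_nonneg:
  "allowing_NE I eps xi ell dmax d \<Longrightarrow> 0 \<le> sum d {1..I}"
  using allowing_NE_range by (intro sum_nonneg) auto

lemma allowing_NE_no_profitable_deviation:
  "allowing_NE I eps xi ell dmax d \<Longrightarrow> i \<in> {1..I} \<Longrightarrow> x \<in> {0..dmax} \<Longrightarrow>
    ln_minus_linear (xi i * ell i) (sum d {1..I} - d i + x + eps i)
      \<le> ln_minus_linear (xi i * ell i) (sum d {1..I} + eps i)"
  using payoff_fun_upd_diff[of i I eps xi ell d x] unfolding allowing_NE_def is_NE_def by fastforce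

lemma allowing_NE_eq_dmax:
  assumes NE: "allowing_NE I eps xi ell dmax d" and i: "i \<in> {1..I}"
    and below_peak: "sum d {1..I} < m i"
  shows "d i = dmax"
proof (rule ccontr)
  assume "d i \<noteq> dmax"
  then have "d i < dmax" using allowing_NE_range[OF NE i] by simp
  define \<delta> where "\<delta> = min (dmax - d i) (m i - sum d {1..I})"
  have \<delta>: "0 < \<delta>" "d i + \<delta> \<in> {0..dmax}" "sum d {1..I} + \<delta> \<le> m i"
    using \<open>d i < dmax\<close> below_peak allowing_NE_range[OF NE i] by (auto simp: \<delta>_def)
  have "ln_minus_linear (xi i * ell i) (sum d {1..I} + eps i)
      < ln_minus_linear (xi i * ell i) (sum d {1..I} + \<delta> + eps i)"
    using \<delta> allowing_NE_sum_nonneg[OF NE] eps_pos[OF i] cost_mult_le_one_iff[OF i]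
    by (intro ln_minus_linear_strict_mono) auto
  then show False
    using allowing_NE_no_profitable_deviation[OF NE i \<delta>(2)] by simp
qed

lemma allowing_NE_eq_0:
  assumes NE: "allowing_NE I eps xi ell dmax d" and i: "i \<in> {1..I}"
    and above_peak: "m i < sum d {1..I}"
  shows "d i = 0"
proof (rule ccontr)
  assume "d i \<noteq> 0"
  then have "0 < d i" using allowing_NE_range[OF NE i] by simp
  define \<delta> where "\<delta> = min (d i) (sum d {1..I} - m i)"
  have \<delta>: "0 < \<delta>" "d i - \<delta> \<in> {0..dmax}" "m i \<le> sum d {1..I} - \<delta>"
    using \<open>0 < d i\<close> above_peak allowing_NE_range[OF NE i] by (auto simp: \<delta>_def)
  have "ln_minus_linear (xi i * ell i) (sum d {1..I} + eps i)
      < ln_minus_linear (xi i * ell i) (sum d {1..I} - \<delta> + eps i)"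
    using \<delta> peak_pos[OF i] one_le_cost_mult_iff[OF i]
    by (intro ln_minus_linear_strict_antimono) auto
  then show False
    using allowing_NE_no_profitable_deviation[OF NE i \<delta>(2)] by simp
qed

definition keep_from :: "nat \<Rightarrow> nat \<Rightarrow> real" where
  "keep_from j = (\<lambda>i. if i < j then 0 else dmax)"

definition keep_after :: "nat \<Rightarrow> nat \<Rightarrow> real" where
  "keep_after j = (\<lambda>i. if i \<le> j then 0 else dmax)"

lemma base_total_pos: "j \<in> {1..I} \<Longrightarrow> i \<in> {1..I} \<Longrightarrow> 0 < (real I - real j) * dmax + eps i"
  using dmax_pos eps_pos[of i] by (simp add: add_nonneg_pos)

lemma sum_keep_from: "j \<in> {1..I} \<Longrightarrow> sum (keep_from j) {1..I} = (real I - real j + 1) * dmax"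
  by (subst sum_step_profile[where j = j and b = dmax]) (auto simp: keep_from_def algebra_simps)

lemma sum_keep_after: "j \<in> {1..I} \<Longrightarrow> sum (keep_after j) {1..I} = (real I - real j) * dmax"
  by (subst sum_step_profile[where j = j and b = dmax]) (auto simp: keep_after_def)

end

locale sorted_game = unlearning_game +
  assumes mval_strict_mono:
    "\<And>i k. i \<in> {1..I} \<Longrightarrow> k \<in> {1..I} \<Longrightarrow> i < k \<Longrightarrow> mval eps xi ell i < mval eps xi ell k"
begin

lemma mval_mono: "i \<in> {1..I} \<Longrightarrow> k \<in> {1..I} \<Longrightarrow> i \<le> k \<Longrightarrow> m i \<le> m k"
  using mval_strict_mono[of i k] by (cases "i = k") auto

context
  fixes j assumes j: "j \<in> {1..I}"
    and band: "(real I - real j) * dmax < m j" "m j < (real I - real j + 1) * dmax"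
begin

lemma keep_from_forbidding_NE:
  assumes "\<forall>i\<in>{j..I}. ln (((real I - real j + 1) * dmax + eps i) / ((real I - real j) * dmax + eps i))
                       \<ge> xi i * ell i * dmax"
  shows "forbidding_NE I eps xi ell dmax (keep_from j)"
proof (rule forbidding_NE_if_no_profitable_flip)
  show "\<forall>i\<in>{1..I}. keep_from j i \<in> {0, dmax}"
    by (simp add: keep_from_def)
next
  fix i assume i: "i \<in> {1..I}" and "keep_from j i = 0"
  then have "m i < m j" using dmax_pos j by (intro mval_strict_mono) (auto simp: keep_from_def split: if_splits)
  then have "1 \<le> xi i * ell i * ((real I - real j + 1) * dmax + eps i)"
    using band one_le_cost_mult_iff[OF i] by simp
  then show "ln_minus_linear (xi i * ell i) (sum (keep_from j) {1..I} + dmax + eps i)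
      \<le> ln_minus_linear (xi i * ell i) (sum (keep_from j) {1..I} + eps i)"
    using base_total_pos[OF j i] dmax_pos unfolding sum_keep_from[OF j]
    by (intro less_imp_le[OF ln_minus_linear_strict_antimono]) (auto simp: algebra_simps)
next
  fix i assume i: "i \<in> {1..I}" and "keep_from j i = dmax"
  then have "i \<in> {j..I}" using dmax_pos by (auto simp: keep_from_def split: if_splits)
  then show "ln_minus_linear (xi i * ell i) (sum (keep_from j) {1..I} - dmax + eps i)
      \<le> ln_minus_linear (xi i * ell i) (sum (keep_from j) {1..I} + eps i)"
    using assms dmax_pos base_total_pos[OF j i] ln_minus_linear_le_iff[of "(real I - real j) * dmax + eps i" dmax]
    unfolding sum_keep_from[OF j] by (simp add: algebra_simps)
qed

lemma keep_after_forbidding_NE: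
  assumes "\<forall>i\<in>{1..j}. ln (((real I - real j + 1) * dmax + eps i) / ((real I - real j) * dmax + eps i))
                       \<le> xi i * ell i * dmax"
  shows "forbidding_NE I eps xi ell dmax (keep_after j)"
proof (rule forbidding_NE_if_no_profitable_flip)
  show "\<forall>i\<in>{1..I}. keep_after j i \<in> {0, dmax}"
    by (simp add: keep_after_def)
next
  fix i assume i: "i \<in> {1..I}" and "keep_after j i = 0"
  then have "i \<in> {1..j}" using dmax_pos by (auto simp: keep_after_def split: if_splits)
  then show "ln_minus_linear (xi i * ell i) (sum (keep_after j) {1..I} + dmax + eps i)
      \<le> ln_minus_linear (xi i * ell i) (sum (keep_after j) {1..I} + eps i)"
    using assms dmax_pos base_total_pos[OF j i] ln_minus_linear_ge_iff[of "(real I - real j) * dmax + eps i" dmax]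
    unfolding sum_keep_after[OF j] by (simp add: algebra_simps)
next
  fix i assume i: "i \<in> {1..I}" and "keep_after j i = dmax"
  then have "j < i" using dmax_pos by (auto simp: keep_after_def split: if_splits)
  then have "1 \<le> real I - real j" using i by auto
  from mult_right_mono[OF this less_imp_le[OF dmax_pos]]
  have "0 < (real I - real j) * dmax - dmax + eps i"
    using eps_pos[OF i] by simp
  moreover have "xi i * ell i * ((real I - real j) * dmax + eps i) \<le> 1"
    using band mval_strict_mono[OF j i \<open>j < i\<close>] cost_mult_le_one_iff[OF i] by simp
  ultimately show "ln_minus_linear (xi i * ell i) (sum (keep_after j) {1..I} - dmax + eps i)
      \<le> ln_minus_linear (xi i * ell i) (sum (keep_after j) {1..I} + eps i)"
    using dmax_pos unfolding sum_keep_after[OF j]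
    by (intro less_imp_le[OF ln_minus_linear_strict_mono]) simp_all
qed

end

end

locale allowing_equilibrium = sorted_game +
  fixes da :: "nat \<Rightarrow> real"
  assumes allowing: "allowing_NE I eps xi ell dmax da"
begin

context
  fixes k assumes k: "k \<in> {1..I}" and interior: "sum da {1..I} = m k"
begin

lemma eq_0_below_interior: "i \<in> {1..I} \<Longrightarrow> i < k \<Longrightarrow> da i = 0"
  using allowing_NE_eq_0[OF allowing] mval_strict_mono k interior by simp

lemma eq_dmax_above_interior: "i \<in> {1..I} \<Longrightarrow> k < i \<Longrightarrow> da i = dmax"
  using allowing_NE_eq_dmax[OF allowing] mval_strict_mono k interior by simp

lemma sum_eq_interior: "sum da {1..I} = da k + (real I - real k) * dmax"
  using k eq_0_below_interior eq_dmax_above_interior by (rule sum_step_profile)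

end

lemma binary_if_outside_bands:
  assumes "\<not> (\<exists>j\<in>{1..I}. (real I - real j) * dmax \<le> m j \<and> m j \<le> (real I - real j + 1) * dmax)"
  shows "\<forall>i\<in>{1..I}. da i \<in> {0, dmax}"
proof (intro ballI)
  fix k assume k: "k \<in> {1..I}"
  show "da k \<in> {0, dmax}"
  proof (rule ccontr)
    assume "da k \<notin> {0, dmax}"
    then have "0 < da k" "da k < dmax" using allowing_NE_range[OF allowing k] by auto
    then have "sum da {1..I} = m k"
      using allowing_NE_eq_0[OF allowing k] allowing_NE_eq_dmax[OF allowing k] by fastforce
    then have "(real I - real k) * dmax \<le> m k" "m k \<le> (real I - real k + 1) * dmax"
      using sum_eq_interior[OF k] \<open>0 < da k\<close> \<open>da k < dmax\<close> by (auto simp: algebra_simps)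
    then show False
      using assms k by blast
  qed
qed

context
  fixes j assumes j: "j \<in> {1..I}"
    and band: "(real I - real j) * dmax < m j" "m j < (real I - real j + 1) * dmax"
begin

lemma sum_eq_mval_in_band: "sum da {1..I} = m j"
proof (cases rule: linorder_cases[of "sum da {1..I}" "m j"])
  case less
  have "keep_from j i \<le> da i" if i: "i \<in> {1..I}" for i
  proof (cases "i < j")
    case False
    then have "m j \<le> m i" using i j by (intro mval_mono) auto
    then show ?thesis using False less allowing_NE_eq_dmax[OF allowing i] by (simp add: keep_from_def)
  qed (use allowing_NE_range[OF allowing i] in \<open>simp add: keep_from_def\<close>)
  then have "sum (keep_from j) {1..I} \<le> sum da {1..I}" by (intro sum_mono)
  then show ?thesis using less band(2) sum_keep_from[OF j] by simp
next
  case greater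
  have "da i \<le> keep_after j i" if i: "i \<in> {1..I}" for i
  proof (cases "i \<le> j")
    case True
    then have "m i \<le> m j" using i j by (intro mval_mono) auto
    then show ?thesis using True greater allowing_NE_eq_0[OF allowing i] by (simp add: keep_after_def)
  qed (use allowing_NE_range[OF allowing i] in \<open>simp add: keep_after_def\<close>)
  then have "sum da {1..I} \<le> sum (keep_after j) {1..I}" by (intro sum_mono)
  then show ?thesis using greater band(1) sum_keep_after[OF j] by simp
qed

lemma sum_eq_in_band: "sum da {1..I} = da j + (real I - real j) * dmax"
  using sum_eq_interior[OF j sum_eq_mval_in_band] .

lemma in_band_bounds: "0 < da j" "da j < dmax"
  using band sum_eq_mval_in_band sum_eq_in_band by (auto simp: algebra_simps)

lemma eq_keep_from_off_band: "i \<in> {1..I} \<Longrightarrow> i \<noteq> j \<Longrightarrow> da i = keep_from j i"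
  using eq_0_below_interior[OF j sum_eq_mval_in_band] eq_dmax_above_interior[OF j sum_eq_mval_in_band]
  by (auto simp: keep_from_def)

lemma eq_keep_after_off_band: "i \<in> {1..I} \<Longrightarrow> i \<noteq> j \<Longrightarrow> da i = keep_after j i"
  using eq_keep_from_off_band by (simp add: keep_from_def keep_after_def)

lemma sum_less_sum_keep_from: "sum da {1..I} < sum (keep_from j) {1..I}"
  using sum_eq_in_band sum_keep_from[OF j] in_band_bounds by (simp add: algebra_simps)

lemma sum_keep_after_less_sum: "sum (keep_after j) {1..I} < sum da {1..I}"
  using sum_eq_in_band sum_keep_after[OF j] in_band_bounds by simp

text \<open>At \<open>da\<close> the total equals user \<open>j\<close>'s preferred total \<open>m j\<close>, so moving its own
  choice in either direction lowers its payoff.\<close>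
lemma payoff_keep_from_less: "payoff I eps xi ell j (keep_from j) < payoff I eps xi ell j da"
proof -
  have "sum (keep_from j) {1..I} - keep_from j j = sum da {1..I} - da j"
    using sum_keep_from[OF j] sum_eq_in_band by (simp add: keep_from_def algebra_simps)
  moreover have "ln_minus_linear (xi j * ell j) (sum (keep_from j) {1..I} + eps j)
      < ln_minus_linear (xi j * ell j) (m j + eps j)"
    using peak_pos[OF j] one_le_cost_mult_iff[OF j] sum_less_sum_keep_from sum_eq_mval_in_band
    by (intro ln_minus_linear_strict_antimono) auto
  ultimately show ?thesis
    using payoff_diff_eq_ln_minus_linear_diff[of "keep_from j" I j da eps xi ell] sum_eq_mval_in_band
    by simp
qed

lemma payoff_keep_from_greater:
  "i \<in> {1..I} \<Longrightarrow> i \<noteq> j \<Longrightarrow> payoff I eps xi ell i da < payoff I eps xi ell i (keep_from j)"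
  using eq_keep_from_off_band sum_less_sum_keep_from allowing_NE_sum_nonneg[OF allowing] eps_pos
  by (intro payoff_strict_mono_total) (auto simp: add_nonneg_pos)

lemma payoff_keep_after_less:
  assumes i: "i \<in> {1..I}"
  shows "payoff I eps xi ell i (keep_after j) < payoff I eps xi ell i da"
proof (cases "i = j")
  case True
  have "sum (keep_after j) {1..I} - keep_after j j = sum da {1..I} - da j"
    using sum_keep_after[OF j] sum_eq_in_band by (simp add: keep_after_def)
  moreover have "ln_minus_linear (xi j * ell j) (sum (keep_after j) {1..I} + eps j)
      < ln_minus_linear (xi j * ell j) (m j + eps j)"
    using base_total_pos[OF j j] cost_mult_le_one_iff[OF j] band sum_keep_after[OF j]
    by (intro ln_minus_linear_strict_mono) auto
  ultimately show ?thesis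
    using payoff_diff_eq_ln_minus_linear_diff[of "keep_after j" I j da eps xi ell] sum_eq_mval_in_band True
    by simp
next
  case False
  then show ?thesis
    using eq_keep_after_off_band[OF i] sum_keep_after_less_sum base_total_pos[OF j i] sum_keep_after[OF j]
    by (intro payoff_strict_mono_total) auto
qed

end

end

theorem corollary2:
  fixes I :: nat and dmax :: real and eps xi ell :: "nat \<Rightarrow> real" and da :: "nat \<Rightarrow> real"
  assumes hI: "I \<ge> 2"
    and hdmax: "dmax > 0"
    and heps: "\<forall>i\<in>{1..I}. eps i > 0"
    and hxi: "\<forall>i\<in>{1..I}. xi i > 0"
    and hell: "\<forall>i\<in>{1..I}. ell i > 0"
    and hmono: "\<forall>i\<in>{1..I}. \<forall>k\<in>{1..I}. i < k \<longrightarrow> mval eps xi ell i < mval eps xi ell k"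
    and hda: "allowing_NE I eps xi ell dmax da"
  shows
   "(\<forall>j\<in>{1..I}.
       (real I - real j) * dmax < mval eps xi ell j \<and> mval eps xi ell j < (real I - real j + 1) * dmax \<and>
       (\<forall>i\<in>{j..I}. ln (((real I - real j + 1) * dmax + eps i) / ((real I - real j) * dmax + eps i))
                       \<ge> xi i * ell i * dmax)
       \<longrightarrow> (let df = (\<lambda>i. if i < j then 0 else dmax) in
             forbidding_NE I eps xi ell dmax df \<and>
             payoff I eps xi ell j df < payoff I eps xi ell j da \<and>
             (\<forall>i\<in>{1..I} - {j}. payoff I eps xi ell i df > payoff I eps xi ell i da) \<and>
             (\<Sum>i\<in>{1..I}. df i) > (\<Sum>i\<in>{1..I}. da i)))
    \<and>
    (\<forall>j\<in>{1..I}.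
       (real I - real j) * dmax < mval eps xi ell j \<and> mval eps xi ell j < (real I - real j + 1) * dmax \<and>
       (\<forall>i\<in>{1..j}. ln (((real I - real j + 1) * dmax + eps i) / ((real I - real j) * dmax + eps i))
                       \<le> xi i * ell i * dmax)
       \<longrightarrow> (let df = (\<lambda>i. if i \<le> j then 0 else dmax) in
             forbidding_NE I eps xi ell dmax df \<and>
             (\<forall>i\<in>{1..I}. payoff I eps xi ell i df < payoff I eps xi ell i da) \<and>
             (\<Sum>i\<in>{1..I}. df i) < (\<Sum>i\<in>{1..I}. da i)))
    \<and>
    ((\<not> (\<exists>j\<in>{1..I}. (real I - real j) * dmax \<le> mval eps xi ell j \<and>
                      mval eps xi ell j \<le> (real I - real j + 1) * dmax))
       \<longrightarrow> forbidding_NE I eps xi ell dmax da)"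
proof -
  interpret allowing_equilibrium I dmax eps xi ell da
    using assms by unfold_locales auto
  show ?thesis
    unfolding Let_def keep_from_def[symmetric] keep_after_def[symmetric]
    using keep_from_forbidding_NE payoff_keep_from_less payoff_keep_from_greater sum_less_sum_keep_from
      keep_after_forbidding_NE payoff_keep_after_less sum_keep_after_less_sum
      forbidding_NE_if_allowing_NE_binary[OF allowing binary_if_outside_bands] dmax_pos
    by (auto simp: less_imp_le)
qed

end
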